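(* Let $K$ be a perfect field of characteristic $p>0$ and let $\theta:K[x]\to K[x^p]$ be the $\mathbb{F}_p$-linear map $\theta(f)=f^p+\frac{d^{p-1}f}{dx^{p-1}}$. Then: (1) the associated graded map $\mathrm{gr}(\theta)$, which equals the Frobenius $F:K[x]\to K[x^p]$, $f\mapsto f^p$, is an isomorphism of $\mathbb{F}_p$-algebras; (2) $\theta$ is an isomorphism of $\mathbb{F}_p$-vector spaces such that $\theta(K[x]_{\le i})=K[x^p]_{\le i}$ for all $i\ge 0$; (3) for each $f\in K[x]$, $l(\theta(f))=l(f)^p$.
   Context: $K[x]_{\le i}=\{f\in K[x]\mid \deg_x f\le i\}$ and $K[x^p]_{\le i}=\{g\in K[x^p]\mid \deg_{x^p}g\le i\}$; these are filtrations whose associated graded algebras are canonically identified with $K[x]$ and $K[x^p]$, and $\theta$ respects them, i.e. $\theta(K[x]_{\le i})\subseteq K[x^p]_{\le i}$. For $f=\sum_{i=0}^d\lambda_ix^i$ with $\lambda_d\ne0$, the leading term is $l(f)=\lambda_dx^d$; for $g=\sum_{i=0}^d\mu_ix^{pi}\in K[x^p]$ with $\mu_d\neq 0$, $l(g)=\mu_dx^{pd}$. *)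

theory Defs
  imports "HOL-Computational_Algebra.Polynomial"
begin

definition Kxp :: "nat \<Rightarrow> 'a::zero poly set" where
  "Kxp p = {g. \<forall>i. \<not> p dvd i \<longrightarrow> coeff g i = 0}"

text \<open>Filtration pieces K[x]_{<= i} and K[x^p]_{<= i} (degree measured in x^p).\<close>
definition Kx_le :: "nat \<Rightarrow> 'a::zero poly set" where
  "Kx_le i = {f. degree f \<le> i}"

definition Kxp_le :: "nat \<Rightarrow> nat \<Rightarrow> 'a::zero poly set" where
  "Kxp_le p i = {g \<in> Kxp p. degree g \<le> p * i}"

definition theta :: "nat \<Rightarrow> 'a::field poly \<Rightarrow> 'a poly" where
  "theta p f = f ^ p + (pderiv ^^ (p - 1)) f"

text \<open>Leading term l(f) = lambda_d x^d (as a polynomial in x; for g in K[x^p] this is mu_d x^{pd}).\<close>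
definition lterm :: "'a::zero poly \<Rightarrow> 'a poly" where
  "lterm f = monom (lead_coeff f) (degree f)"

end

theory Submission
  imports Defs "HOL-Computational_Algebra.Computational_Algebra"
begin

text \<open>In characteristic \<open>p\<close> the \<open>(p - 1)\<close>-st derivative multiplies the coefficient of
  \<open>x\<^sup>j\<^sup>+\<^sup>p\<^sup>-\<^sup>1\<close> by \<open>(j + 1) \<cdots> (j + p - 1)\<close>, which vanishes unless \<open>p\<close> divides \<open>j\<close>;
  so \<open>theta p f\<close> is the Frobenius \<open>f\<^sup>p\<close> plus a correction in \<open>K[x\<^sup>p]\<close> of degree less
  than \<open>deg f\<close>. Hence \<open>theta\<close> maps into \<open>K[x\<^sup>p]\<close>, preserves leading terms up to the
  \<open>p\<close>-th power, and is therefore injective and compatible with the filtrations.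
  Over a perfect field every element of \<open>K[x\<^sup>p]\<close> is a \<open>p\<close>-th power, and surjectivity
  follows by induction on the degree: subtracting \<open>theta\<close> of a \<open>p\<close>-th root leaves only
  the lower-degree correction.\<close>

lemma dvd_pochhammer_nat:
  fixes n :: nat
  assumes "i < k"
  shows "n + i dvd pochhammer n k"
proof -
  have "n + of_nat i dvd (\<Prod>l\<in>{0..<k}. n + of_nat l)"
    using assms by (intro dvd_prodI) auto
  then show ?thesis by (simp add: pochhammer_prod)
qed

text \<open>One of the factors \<open>j + 1, \<dots>, j + p - 1\<close> is a multiple of \<open>p\<close>.\<close>
lemma coeff_higher_pderiv_CHAR_eq_0:
  fixes f :: "'a::idom poly"
  assumes "CHAR('a) = p" "p > 0" "\<not> p dvd j"
  shows "coeff ((pderiv ^^ (p - 1)) f) j = 0"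
proof -
  define i where "i = p - 1 - j mod p"
  have j_mod: "0 < j mod p" "j mod p < p"
    using assms by (auto simp: mod_greater_zero_iff_not_dvd)
  have "p dvd Suc j + i"
  proof -
    have "Suc j + i = p * (j div p) + p"
      using j_mod mult_div_mod_eq[of p j] unfolding i_def by linarith
    then show ?thesis by simp
  qed
  moreover have "Suc j + i dvd pochhammer (Suc j) (p - 1)"
    using j_mod unfolding i_def by (intro dvd_pochhammer_nat) linarith
  ultimately have "of_nat (pochhammer (Suc j) (p - 1)) = (0 :: 'a)"
    using assms(1) of_nat_eq_0_iff_char_dvd dvd_trans by blast
  then show ?thesis
    by (simp add: coeff_higher_pderiv flip: pochhammer_of_nat)
qed

lemma higher_pderiv_CHAR_in_Kxp:
  fixes f :: "'a::idom poly"
  assumes "CHAR('a) = p" "p > 0"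
  shows "(pderiv ^^ (p - 1)) f \<in> Kxp p"
  using coeff_higher_pderiv_CHAR_eq_0[OF assms] by (auto simp: Kxp_def)

lemma degree_higher_pderiv_less:
  fixes f :: "'a::idom poly"
  assumes "0 < k" "(pderiv ^^ k) f \<noteq> 0"
  shows "degree ((pderiv ^^ k) f) < degree f"
proof -
  let ?d = "degree ((pderiv ^^ k) f)"
  have "coeff ((pderiv ^^ k) f) ?d \<noteq> 0"
    using assms(2) by simp
  then have "coeff f (?d + k) \<noteq> 0"
    by (simp add: coeff_higher_pderiv)
  then have "?d + k \<le> degree f"
    by (rule le_degree)
  with assms(1) show ?thesis by linarith
qed

lemma Kxp_add: "f \<in> Kxp p \<Longrightarrow> g \<in> Kxp p \<Longrightarrow> f + g \<in> Kxp p"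
  by (auto simp: Kxp_def)

lemma Kxp_uminus: "(f :: 'a::ab_group_add poly) \<in> Kxp p \<Longrightarrow> - f \<in> Kxp p"
  by (auto simp: Kxp_def)

lemma coeff_power_CHAR:
  fixes f :: "'a::comm_semiring_1 poly"
  assumes "CHAR('a) = p" "prime p"
  shows "coeff (f ^ p) n = (if p dvd n then coeff f (n div p) ^ p else 0)"
proof -
  have "f ^ p = (\<Sum>i\<le>degree f. monom (coeff f i) i) ^ p"
    by (simp add: poly_as_sum_of_monoms)
  also have "\<dots> = (\<Sum>i\<le>degree f. monom (coeff f i ^ p) (i * p))"
    using assms by (subst freshmans_dream_sum) (auto simp: monom_power)
  finally have "coeff (f ^ p) n = (\<Sum>i\<le>degree f. if i * p = n then coeff f i ^ p else 0)"
    by (simp add: coeff_sum)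
  also have "\<dots> = (if p dvd n then coeff f (n div p) ^ p else 0)"
  proof (cases "p dvd n")
    case True
    then obtain k where n: "n = p * k" by blast
    have "p > 0" using assms(2) prime_gt_0_nat by blast
    then have "(\<Sum>i\<le>degree f. if i * p = n then coeff f i ^ p else 0)
        = (if k \<le> degree f then coeff f k ^ p else 0)"
      by (simp add: n sum.delta)
    also have "\<dots> = coeff f k ^ p"
      using \<open>p > 0\<close> by (auto simp: coeff_eq_0 zero_power)
    finally show ?thesis using True \<open>p > 0\<close> by (simp add: n)
  qed (auto intro!: sum.neutral)
  finally show ?thesis .
qed

lemma power_CHAR_in_Kxp:
  fixes f :: "'a::comm_semiring_1 poly"
  assumes "CHAR('a) = p" "prime p"
  shows "f ^ p \<in> Kxp p"
  using coeff_power_CHAR[OF assms] by (simp add: Kxp_def)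

lemma power_CHAR_diff:
  fixes x y :: "'a::comm_ring_1"
  assumes "CHAR('a) = p" "prime p"
  shows "(x - y) ^ p = x ^ p - y ^ p"
proof -
  have "((x - y) + y) ^ p = (x - y) ^ p + y ^ p"
    using assms by (intro freshmans_dream) simp_all
  then show ?thesis by (simp add: eq_diff_eq)
qed

lemma inj_power_CHAR_poly:
  assumes "CHAR('a::idom) = p" "prime p"
  shows "inj (\<lambda>f::'a poly. f ^ p)"
proof (rule injI)
  fix f g :: "'a poly"
  assume "f ^ p = g ^ p"
  then have "(f - g) ^ p = 0"
    using assms by (simp add: power_CHAR_diff)
  then show "f = g" by simp
qed

lemma Kxp_subset_range_power_CHAR:
  fixes g :: "'a::comm_semiring_1 poly"
  assumes "CHAR('a) = p" "prime p" and perfect: "surj (\<lambda>x::'a. x ^ p)"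
    and "g \<in> Kxp p"
  shows "\<exists>f. f ^ p = g"
proof -
  define r where "r = inv (\<lambda>x::'a. x ^ p)"
  have r: "r c ^ p = c" for c
    unfolding r_def by (metis perfect surj_f_inv_f)
  define f where "f = (\<Sum>i\<le>degree g. monom (r (coeff g (p * i))) i)"
  have p_pos: "p > 0" using assms(2) prime_gt_0_nat by blast
  have "coeff (f ^ p) n = coeff g n" for n
  proof (cases "p dvd n")
    case True
    then obtain k where n: "n = p * k" by blast
    have "coeff f k = (if k \<le> degree g then r (coeff g n) else 0)"
      by (simp add: f_def coeff_sum n)
    moreover have "coeff g n = 0" if "\<not> k \<le> degree g"
    proof -
      have "k \<le> n" using p_pos by (simp add: n)
      with that show ?thesis by (intro coeff_eq_0) linarith
    qed
    moreover have "coeff (f ^ p) n = coeff f k ^ p"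
      using p_pos by (simp add: coeff_power_CHAR[OF assms(1,2)] n)
    ultimately show ?thesis
      using p_pos by (auto simp: r zero_power)
  next
    case False
    with \<open>g \<in> Kxp p\<close> show ?thesis
      by (simp add: coeff_power_CHAR[OF assms(1,2)] Kxp_def)
  qed
  then show ?thesis by (blast intro: poly_eqI)
qed

lemma theta_add:
  fixes f g :: "'a::field poly"
  assumes "CHAR('a) = p" "prime p"
  shows "theta p (f + g) = theta p f + theta p g"
  using assms by (simp add: theta_def freshmans_dream higher_pderiv_add)

lemma theta_diff:
  fixes f g :: "'a::field poly"
  assumes "CHAR('a) = p" "prime p"
  shows "theta p (f - g) = theta p f - theta p g"
  using theta_add[OF assms, of "f - g" g] by (simp add: eq_diff_eq)

lemma theta_in_Kxp:
  fixes f :: "'a::field poly"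
  assumes "CHAR('a) = p" "prime p"
  shows "theta p f \<in> Kxp p"
  unfolding theta_def using assms prime_gt_0_nat
  by (intro Kxp_add power_CHAR_in_Kxp higher_pderiv_CHAR_in_Kxp) auto

lemma degree_and_lead_coeff_theta:
  fixes f :: "'a::field poly"
  assumes "CHAR('a) = p" "prime p"
  shows "degree (theta p f) = p * degree f \<and> lead_coeff (theta p f) = lead_coeff f ^ p"
proof -
  let ?D = "(pderiv ^^ (p - 1)) f"
  have "p \<ge> 2" using assms(2) prime_ge_2_nat by blast
  have "degree (theta p f) = degree (f ^ p) \<and> lead_coeff (theta p f) = lead_coeff (f ^ p)"
  proof (cases "?D = 0")
    case False
    then have "degree ?D < degree f"
      using \<open>p \<ge> 2\<close> by (intro degree_higher_pderiv_less) auto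
    also have "degree f \<le> degree (f ^ p)"
      using \<open>p \<ge> 2\<close> by (cases "f = 0") (auto simp: degree_power_eq)
    finally have less: "degree ?D < degree (f ^ p)" .
    have "degree (f ^ p + ?D) = degree (f ^ p)"
      using less by (rule degree_add_eq_left)
    moreover have "lead_coeff (?D + f ^ p) = lead_coeff (f ^ p)"
      using less by (rule lead_coeff_add_le)
    ultimately show ?thesis
      by (simp add: theta_def add.commute)
  qed (simp add: theta_def)
  moreover have "degree (f ^ p) = p * degree f"
    by (cases "f = 0") (simp_all add: degree_power_eq power_0_left)
  ultimately show ?thesis
    by (metis lead_coeff_power)
qed

lemma degree_theta:
  fixes f :: "'a::field poly"
  assumes "CHAR('a) = p" "prime p"
  shows "degree (theta p f) = p * degree f"
  using degree_and_lead_coeff_theta[OF assms] by (rule conjunct1)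

lemma lead_coeff_theta:
  fixes f :: "'a::field poly"
  assumes "CHAR('a) = p" "prime p"
  shows "lead_coeff (theta p f) = lead_coeff f ^ p"
  using degree_and_lead_coeff_theta[OF assms] by (rule conjunct2)

lemma lterm_theta:
  fixes f :: "'a::field poly"
  assumes "CHAR('a) = p" "prime p"
  shows "lterm (theta p f) = lterm f ^ p"
  unfolding lterm_def lead_coeff_theta[OF assms]
  by (simp add: degree_theta[OF assms] monom_power mult.commute)

lemma inj_theta:
  assumes "CHAR('a::field) = p" "prime p"
  shows "inj (theta p :: 'a poly \<Rightarrow> 'a poly)"
proof (rule injI)
  fix f g :: "'a poly"
  assume "theta p f = theta p g"
  then have "theta p (f - g) = 0"
    by (simp add: theta_diff[OF assms])
  then have "lead_coeff (f - g) ^ p = 0"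
    by (metis lead_coeff_theta[OF assms] leading_coeff_0_iff)
  then show "f = g"
    by (metis leading_coeff_0_iff power_eq_0_iff right_minus_eq)
qed

lemma Kxp_subset_range_theta:
  fixes g :: "'a::field poly"
  assumes "CHAR('a) = p" "prime p" and perfect: "surj (\<lambda>x::'a. x ^ p)"
  shows "g \<in> Kxp p \<Longrightarrow> \<exists>f. theta p f = g"
proof (induction "degree g" arbitrary: g rule: less_induct)
  case less
  obtain f\<^sub>0 where f\<^sub>0: "f\<^sub>0 ^ p = g"
    using Kxp_subset_range_power_CHAR[OF assms less.prems] by blast
  define h where "h = - (pderiv ^^ (p - 1)) f\<^sub>0"
  have g: "g = theta p f\<^sub>0 + h"
    by (simp add: h_def theta_def f\<^sub>0)
  have "\<exists>f. theta p f = h"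
  proof (cases "h = 0")
    case True
    then show ?thesis by (metis add_cancel_right_right theta_add[OF assms(1,2)])
  next
    case False
    have "p \<ge> 2" using assms(2) prime_ge_2_nat by blast
    then have "degree h < degree f\<^sub>0"
      using False by (simp add: h_def degree_higher_pderiv_less)
    also have "degree f\<^sub>0 \<le> degree g"
      using \<open>p \<ge> 2\<close> f\<^sub>0 by (cases "f\<^sub>0 = 0") (auto simp: degree_power_eq)
    finally have "degree h < degree g" .
    moreover have "h \<in> Kxp p"
      using assms(1,2) prime_gt_0_nat unfolding h_def
      by (intro Kxp_uminus higher_pderiv_CHAR_in_Kxp) auto
    ultimately show ?thesis using less.hyps by blast
  qed
  then obtain f\<^sub>1 where "theta p f\<^sub>1 = h" by blast
  then have "theta p (f\<^sub>0 + f\<^sub>1) = g"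
    by (simp add: theta_add[OF assms(1,2)] g)
  then show ?case by blast
qed

lemma bij_betw_power_CHAR_Kxp:
  assumes "CHAR('a::field) = p" "prime p" "surj (\<lambda>x::'a. x ^ p)"
  shows "bij_betw (\<lambda>f::'a poly. f ^ p) UNIV (Kxp p)"
  unfolding bij_betw_def
  using inj_power_CHAR_poly[OF assms(1,2)] power_CHAR_in_Kxp[OF assms(1,2)]
    Kxp_subset_range_power_CHAR[OF assms] by blast

lemma bij_betw_theta_Kxp:
  assumes "CHAR('a::field) = p" "prime p" "surj (\<lambda>x::'a. x ^ p)"
  shows "bij_betw (theta p :: 'a poly \<Rightarrow> 'a poly) UNIV (Kxp p)"
  unfolding bij_betw_def
  using inj_theta[OF assms(1,2)] theta_in_Kxp[OF assms(1,2)]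
    Kxp_subset_range_theta[OF assms] by blast

lemma theta_sub_power_lower_order:
  fixes f :: "'a::field poly"
  assumes "CHAR('a) = p" "prime p" "f \<in> Kx_le i"
  shows "theta p f - f ^ p \<in> Kxp p \<and> (theta p f - f ^ p = 0 \<or> degree (theta p f - f ^ p) < p * i)"
proof -
  have "p \<ge> 2" using assms(2) prime_ge_2_nat by blast
  have "degree ((pderiv ^^ (p - 1)) f) < p * i" if "(pderiv ^^ (p - 1)) f \<noteq> 0"
  proof -
    have "degree ((pderiv ^^ (p - 1)) f) < degree f"
      using that \<open>p \<ge> 2\<close> by (intro degree_higher_pderiv_less) auto
    moreover have "degree f \<le> i" using assms(3) by (simp add: Kx_le_def)
    moreover have "i \<le> p * i" using \<open>p \<ge> 2\<close> by simp
    ultimately show ?thesis by linarith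
  qed
  then show ?thesis
    using higher_pderiv_CHAR_in_Kxp[OF assms(1)] \<open>p \<ge> 2\<close> by (auto simp: theta_def)
qed

lemma theta_image_Kx_le:
  assumes "CHAR('a::field) = p" "prime p" "surj (\<lambda>x::'a. x ^ p)"
  shows "theta p ` (Kx_le i :: 'a poly set) = Kxp_le p i"
proof (intro equalityI subsetI)
  fix g :: "'a poly"
  assume "g \<in> theta p ` Kx_le i"
  then obtain f where "g = theta p f" "degree f \<le> i"
    by (auto simp: Kx_le_def)
  then show "g \<in> Kxp_le p i"
    using theta_in_Kxp[OF assms(1,2)]
    by (auto simp: Kxp_le_def degree_theta[OF assms(1,2)])
next
  fix g :: "'a poly"
  assume g: "g \<in> Kxp_le p i"
  then obtain f where f: "theta p f = g"
    using Kxp_subset_range_theta[OF assms] by (auto simp: Kxp_le_def)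
  have "p * degree f \<le> p * i"
    using g by (simp add: Kxp_le_def degree_theta[OF assms(1,2)] flip: f)
  then have "f \<in> Kx_le i"
    using prime_gt_0_nat[OF assms(2)] by (simp add: Kx_le_def)
  with f show "g \<in> theta p ` Kx_le i" by blast
qed

theorem lemma2p1:
  fixes p :: nat
  assumes char: "CHAR('a::field) = p" and ppos: "p > 0"
    and perfect: "surj (\<lambda>x::'a. x ^ p)"
  shows
    \<comment> \<open>(1) gr(theta) is the Frobenius, and the Frobenius is an F_p-algebra isomorphism onto K[x^p]\<close>
    "(\<forall>i (f::'a poly). f \<in> Kx_le i \<longrightarrow>
        theta p f - f ^ p \<in> Kxp p \<and>
        (theta p f - f ^ p = 0 \<or> degree (theta p f - f ^ p) < p * i))
     \<and> (\<forall>f g :: 'a poly. (f + g) ^ p = f ^ p + g ^ p)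
     \<and> (\<forall>f g :: 'a poly. (f * g) ^ p = f ^ p * g ^ p)
     \<and> (1::'a poly) ^ p = 1
     \<and> bij_betw (\<lambda>f::'a poly. f ^ p) UNIV (Kxp p)
     \<comment> \<open>(2) theta is an F_p-linear bijection onto K[x^p] respecting the filtrations exactly\<close>
     \<and> (\<forall>f g :: 'a poly. theta p (f + g) = theta p f + theta p g)
     \<and> bij_betw (theta p :: 'a poly \<Rightarrow> 'a poly) UNIV (Kxp p)
     \<and> (\<forall>i. theta p ` (Kx_le i :: 'a poly set) = Kxp_le p i)
     \<comment> \<open>(3) leading terms\<close>
     \<and> (\<forall>f :: 'a poly. lterm (theta p f) = lterm f ^ p)"
proof -
  have prime: "prime p"
    using prime_CHAR_semidom[where 'a = 'a] char ppos by simp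
  have frobenius_add: "(f + g) ^ p = f ^ p + g ^ p" for f g :: "'a poly"
    using char prime by (simp add: freshmans_dream)
  show ?thesis
    using theta_sub_power_lower_order[OF char prime] frobenius_add
      bij_betw_power_CHAR_Kxp[OF char prime perfect] theta_add[OF char prime]
      bij_betw_theta_Kxp[OF char prime perfect] theta_image_Kx_le[OF char prime perfect]
      lterm_theta[OF char prime]
    by (simp add: power_mult_distrib)
qed

end
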